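(* For all $m\ge0$, $$Q_{m+1}(x)=(2m+1)(2+3x)Q_m(x)-2x(1+x)Q_m'(x),\qquad Q_0(x)=1.$$
   Context: $P_m(x)=\sum_{i=0}^m d_i(m)x^i$ with $d_i(m)=2^{-2m}\sum_{k=i}^m 2^k\binom{2m-2k}{m-k}\binom{m+k}{k}\binom{k}{i}$ (the Boros–Moll polynomials); $Q_m(x)=2^m m!\,x^mP_m(1/x)$. *)

theory Defs
  imports "HOL-Computational_Algebra.Polynomial"
begin

definition bm_d :: "nat \<Rightarrow> nat \<Rightarrow> real" where
  "bm_d i m = (1 / 2 ^ (2*m)) * (\<Sum>k=i..m. 2 ^ k * real ((2*m - 2*k) choose (m - k))
                 * real ((m + k) choose k) * real (k choose i))"

definition bm_P :: "nat \<Rightarrow> real poly" where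
  "bm_P m = (\<Sum>i\<le>m. monom (bm_d i m) i)"

text \<open>Q_m(x) = 2^m m! x^m P_m(1/x) = 2^m m! sum_{i=0}^m d_i(m) x^(m-i), as a polynomial.\<close>
definition bm_Q :: "nat \<Rightarrow> real poly" where
  "bm_Q m = smult (2 ^ m * fact m) (\<Sum>i\<le>m. monom (bm_d i m) (m - i))"

end

theory Submission
  imports Defs
begin

text \<open>The coefficient of \<open>x^j\<close> in \<open>Q_m\<close> is \<open>2^m m! d_{m-j}(m)\<close>, and the operator on the
  right acts on coefficients by a two-term rule, so the claim amounts to the recurrence
  \<open>2(m+1) d_i(m+1) = 2(m+i) d_{i-1}(m) + (4m+2i+3) d_i(m)\<close>.  This is proved by creative
  telescoping: the recurrence operator maps the summand \<open>F(m,k)\<close> of \<open>d_i(m)\<close> to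
  \<open>G(k+1) - G(k)\<close> for an explicit certificate \<open>G\<close> that vanishes at \<open>k = 0\<close> and
  \<open>k = m+2\<close>, so summing over \<open>k\<close> gives zero.\<close>

lemma binomial_absorb_comp_Suc: "(n - k) * (n choose k) = Suc k * (n choose Suc k)"
  by (simp only: binomial_absorb_comp binomial_absorption)

lemma of_nat_binomial_absorb_comp_Suc:
  "(of_nat n - of_nat k :: 'a :: comm_ring_1) * of_nat (n choose k) = of_nat (Suc k) * of_nat (n choose Suc k)"
proof (cases "k \<le> n")
  case True
  then show ?thesis
    using arg_cong[OF binomial_absorb_comp_Suc[of n k], of "of_nat :: nat \<Rightarrow> 'a"]
    by (simp only: of_nat_mult of_nat_diff)
next
  case False
  then show ?thesis by (simp add: binomial_eq_0)
qed

lemma central_binomial_Suc: "(2*n + 2) choose (n + 1) = 2 * ((2*n + 1) choose (n + 1))"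
proof -
  have "(2*n + 1) choose n = (2*n + 1) choose (n + 1)"
    using binomial_symmetric[of n "2*n + 1"] by simp
  then show ?thesis by simp
qed

lemma Suc_times_central_binomial_Suc:
  "(n + 1) * ((2*n + 2) choose (n + 1)) = 2 * (2*n + 1) * ((2*n) choose n)"
proof -
  have "(n + 1) * ((2*n + 2) choose (n + 1)) = 2 * ((n + 1) * ((2*n + 1) choose (n + 1)))"
    unfolding central_binomial_Suc by simp
  also have "(n + 1) * ((2*n + 1) choose (n + 1)) = (2*n + 1) * ((2*n) choose n)"
    using Suc_times_binomial[of n "2*n"] by simp
  finally show ?thesis by simp
qed

text \<open>The telescoping step divided by \<open>2^k\<close>: \<open>A\<close>, \<open>B\<close>, \<open>C\<close> stand for the three binomials of the
  summand and the primed letters for their shifts, which are tied to them by absorption and Pascal.\<close>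
lemma bm_certificate_identity:
  fixes A A' B B1 B' C C' C'' a k m i :: real
  assumes "m = k + a" "(a + 1) * A' = 2 * (2*a + 1) * A"
    "(m + 1) * B1 = (m + k + 1) * B" "(k + 1) * B' = (m + k + 1) * B"
    "C'' = C + C'" "(k + 1 - i) * C' = i * C"
  shows "(m + 1) * A' * B1 * C - 4 * (m + i) * A * B * C' - 2 * (4*m + 2*i + 3) * A * B * C
    = - 4 * (k + 1) * A * B' * C'' + 2 * k * A' * B * C"
  using assms by algebra

text \<open>The summand of \<open>4^m d_i(m)\<close>; the guard matters, since for \<open>k > m\<close> the truncated
  subtractions would turn the first binomial into \<open>0 choose 0 = 1\<close>.\<close>
definition bm_term :: "nat \<Rightarrow> nat \<Rightarrow> nat \<Rightarrow> real" where
  "bm_term m k i = (if k \<le> m then 2 ^ k * real ((2*m - 2*k) choose (m - k))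
     * real ((m + k) choose k) * real (k choose i) else 0)"

definition bm_defect :: "nat \<Rightarrow> nat \<Rightarrow> nat \<Rightarrow> real" where
  "bm_defect m i k = real (m + 1) * bm_term (m + 1) k i
     - (if i = 0 then 0 else 4 * real (m + i) * bm_term m k (i - 1))
     - 2 * (4 * real m + 2 * real i + 3) * bm_term m k i"

definition bm_cert :: "nat \<Rightarrow> nat \<Rightarrow> nat \<Rightarrow> real" where
  "bm_cert m i k = (if k \<le> m + 1 then - (2 ^ (k + 1) * real k
     * real ((2*m + 2 - 2*k) choose (m + 1 - k)) * real ((m + k) choose k) * real (k choose i)) else 0)"

lemma bm_d_eq_sum_bm_term: "bm_d i m = (\<Sum>k\<le>m. bm_term m k i) / 2 ^ (2*m)"
proof -
  have "(\<Sum>k=i..m. 2 ^ k * real ((2*m - 2*k) choose (m - k)) * real ((m + k) choose k)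
      * real (k choose i)) = (\<Sum>k\<le>m. bm_term m k i)"
    by (rule sum.mono_neutral_cong_left) (auto simp: bm_term_def)
  then show ?thesis by (simp add: bm_d_def)
qed

lemma bm_defect_top: "bm_defect m i (m + 1) = bm_cert m i (m + 2) - bm_cert m i (m + 1)"
proof -
  have idx: "2*(m + 1) - 2*(m + 1) = 0" "m + 1 - (m + 1) = 0" "m + 1 + (m + 1) = 2*m + 2"
    "2*m + 2 - 2*(m + 1) = 0" "m + (m + 1) = 2*m + 1"
    by simp_all
  have "bm_defect m i (m + 1) = real (m + 1) * (2 ^ (m + 1) * real ((2*m + 2) choose (m + 1))
      * real ((m + 1) choose i))"
    unfolding bm_defect_def bm_term_def idx by simp
  moreover have "bm_cert m i (m + 1) = - (2 ^ (m + 2) * real (m + 1)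
      * real ((2*m + 1) choose (m + 1)) * real ((m + 1) choose i))"
    unfolding bm_cert_def idx by simp
  moreover have "bm_cert m i (m + 2) = 0"
    by (simp add: bm_cert_def)
  ultimately show ?thesis
    unfolding central_binomial_Suc of_nat_mult by simp
qed

lemma bm_binomial_step_identity:
  assumes m: "m = k + a"
  shows "(real m + 1) * real ((2*a + 2) choose (a + 1)) * real (Suc (m + k) choose k) * real (k choose i)
      - 4 * (real m + real i) * real ((2*a) choose a) * real ((m + k) choose k)
          * (if i = 0 then 0 else real (k choose (i - 1)))
      - 2 * (4 * real m + 2 * real i + 3) * real ((2*a) choose a) * real ((m + k) choose k)
          * real (k choose i)
    = - 4 * (real k + 1) * real ((2*a) choose a) * real (Suc (m + k) choose Suc k) * real (Suc k choose i)
      + 2 * real k * real ((2*a + 2) choose (a + 1)) * real ((m + k) choose k) * real (k choose i)"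
proof (rule bm_certificate_identity[where a = "real a"])
  show "real m = real k + real a"
    using m by simp
  have "real ((a + 1) * ((2*a + 2) choose (a + 1))) = real (2 * (2*a + 1) * ((2*a) choose a))"
    by (simp only: Suc_times_central_binomial_Suc)
  then show "(real a + 1) * real ((2*a + 2) choose (a + 1)) = 2 * (2 * real a + 1) * real ((2*a) choose a)"
    by (simp only: of_nat_mult of_nat_add of_nat_1 of_nat_numeral)
  have "real ((m + 1) * (Suc (m + k) choose k)) = real (Suc (m + k) * ((m + k) choose k))"
    using binomial_absorb_comp[of "Suc (m + k)" k] by simp
  then show "(real m + 1) * real (Suc (m + k) choose k) = (real m + real k + 1) * real ((m + k) choose k)"
    by (simp add: algebra_simps)
  have "real (Suc k * (Suc (m + k) choose Suc k)) = real (Suc (m + k) * ((m + k) choose k))"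
    by (simp only: Suc_times_binomial)
  then show "(real k + 1) * real (Suc (m + k) choose Suc k) = (real m + real k + 1) * real ((m + k) choose k)"
    by (simp add: algebra_simps)
  show "real (Suc k choose i) = real (k choose i) + (if i = 0 then 0 else real (k choose (i - 1)))"
    by (cases i) simp_all
  show "(real k + 1 - real i) * (if i = 0 then 0 else real (k choose (i - 1))) = real i * real (k choose i)"
    using of_nat_binomial_absorb_comp_Suc[of k "i - 1", where 'a=real] by (cases i) simp_all
qed

lemma bm_defect_below_top:
  assumes "k \<le> m"
  shows "bm_defect m i k = bm_cert m i (Suc k) - bm_cert m i k"
proof -
  obtain a where m: "m = k + a" using assms le_Suc_ex by blast
  define A where "A = real ((2*a) choose a)"
  define A' where "A' = real ((2*a + 2) choose (a + 1))"
  define B where "B = real ((m + k) choose k)"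
  define B1 where "B1 = real (Suc (m + k) choose k)"
  define B' where "B' = real (Suc (m + k) choose Suc k)"
  define C where "C = real (k choose i)"
  define C' where "C' = (if i = 0 then 0 else real (k choose (i - 1)))"
  define C'' where "C'' = real (Suc k choose i)"
  have "bm_term (m + 1) k i = 2 ^ k * A' * B1 * C"
    using assms unfolding bm_term_def A'_def B1_def C_def by (simp add: m)
  moreover have "bm_term m k j = 2 ^ k * A * B * real (k choose j)" for j
    using assms unfolding bm_term_def A_def B_def by (simp add: m)
  ultimately have defect: "bm_defect m i k = 2 ^ k * ((real m + 1) * A' * B1 * C
      - 4 * (real m + real i) * A * B * C' - 2 * (4 * real m + 2 * real i + 3) * A * B * C)"
    unfolding bm_defect_def C'_def C_def by (simp add: algebra_simps)
  have "bm_cert m i (Suc k) = - (2 ^ (k + 2) * (real k + 1) * A * B' * C'')"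
    using assms unfolding bm_cert_def A_def B'_def C''_def by (simp add: m)
  moreover have "bm_cert m i k = - (2 ^ (k + 1) * real k * A' * B * C)"
    using assms unfolding bm_cert_def A'_def B_def C_def by (simp add: m)
  ultimately have "bm_cert m i (Suc k) - bm_cert m i k
      = 2 ^ k * (- 4 * (real k + 1) * A * B' * C'' + 2 * real k * A' * B * C)"
    by (simp add: power_add algebra_simps)
  then show ?thesis
    using bm_binomial_step_identity[OF m, of i]
    unfolding defect A_def A'_def B_def B1_def B'_def C_def C'_def C''_def by simp
qed

lemma bm_d_Suc_recurrence:
  "2 * real (m + 1) * bm_d i (m + 1) =
     (if i = 0 then 0 else 2 * real (m + i) * bm_d (i - 1) m) + (4 * real m + 2 * real i + 3) * bm_d i m"
proof -
  have "(\<Sum>k<Suc (Suc m). bm_defect m i k) = (\<Sum>k<Suc (Suc m). bm_cert m i (Suc k) - bm_cert m i k)"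
  proof (rule sum.cong[OF refl])
    fix k assume "k \<in> {..<Suc (Suc m)}"
    then consider "k = m + 1" | "k \<le> m" by fastforce
    then show "bm_defect m i k = bm_cert m i (Suc k) - bm_cert m i k"
      by cases (use bm_defect_top bm_defect_below_top in simp_all)
  qed
  also have "\<dots> = bm_cert m i (Suc (Suc m)) - bm_cert m i 0"
    by (rule sum_lessThan_telescope)
  also have "\<dots> = 0"
    by (simp add: bm_cert_def)
  finally have telescoped: "(\<Sum>k\<le>Suc m. bm_defect m i k) = 0"
    unfolding lessThan_Suc_atMost .
  have sum_m: "(\<Sum>k\<le>Suc m. bm_term m k j) = 2 ^ (2*m) * bm_d j m" for j
    by (simp add: bm_d_eq_sum_bm_term bm_term_def)
  have sum_Suc_m: "(\<Sum>k\<le>Suc m. bm_term (m + 1) k i) = 2 ^ (2*m) * (4 * bm_d i (m + 1))"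
    by (simp add: bm_d_eq_sum_bm_term)
  have sum_pred: "(\<Sum>k\<le>Suc m. if i = 0 then 0 else 4 * real (m + i) * bm_term m k (i - 1))
      = 2 ^ (2*m) * (if i = 0 then 0 else 4 * real (m + i) * bm_d (i - 1) m)"
    by (cases "i = 0") (simp_all add: sum_distrib_left[symmetric] sum_m del: sum.atMost_Suc)
  have "(\<Sum>k\<le>Suc m. bm_defect m i k) = 2 ^ (2*m) * (4 * real (m + 1) * bm_d i (m + 1)
      - (if i = 0 then 0 else 4 * real (m + i) * bm_d (i - 1) m)
      - 2 * (4 * real m + 2 * real i + 3) * bm_d i m)"
    unfolding bm_defect_def sum_subtractf sum_distrib_left[symmetric] sum_Suc_m sum_m sum_pred
    by (simp add: algebra_simps)
  with telescoped have "4 * real (m + 1) * bm_d i (m + 1)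
      - (if i = 0 then 0 else 4 * real (m + i) * bm_d (i - 1) m)
      - 2 * (4 * real m + 2 * real i + 3) * bm_d i m = 0"
    by simp
  then show ?thesis by (cases "i = 0") (simp_all add: algebra_simps)
qed

lemma coeff_bm_Q: "coeff (bm_Q m) j = (if j \<le> m then 2 ^ m * fact m * bm_d (m - j) m else 0)"
proof -
  have "coeff (\<Sum>i\<le>m. monom (bm_d i m) (m - i)) j = (\<Sum>i\<le>m. if i = m - j \<and> j \<le> m then bm_d i m else 0)"
    unfolding coeff_sum by (rule sum.cong) (auto simp: coeff_monom)
  then show ?thesis
    by (simp add: bm_Q_def sum.delta)
qed

lemma bm_d_eq_0: "m < i \<Longrightarrow> bm_d i m = 0"
  by (simp add: bm_d_def)

lemma coeff_smult_linear_minus_pderiv: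
  fixes p :: "'a :: {comm_ring_1, semiring_no_zero_divisors} poly"
  shows "coeff (smult c ([:2, 3:] * p) - [:0, 2, 2:] * pderiv p) j =
    (2*c - 2 * of_nat j) * coeff p j + (if j = 0 then 0 else (3*c - 2 * of_nat j + 2) * coeff p (j - 1))"
proof -
  have "[:0, 2, 2:] * pderiv p = pCons 0 (smult 2 (pderiv p) + pCons 0 (smult 2 (pderiv p)))"
    by simp
  moreover have "[:2, 3:] * p = smult 2 p + pCons 0 (smult 3 p)" by simp
  ultimately show ?thesis
    by (cases j; cases "j - 1") (auto simp: coeff_pderiv coeff_pCons algebra_simps split: nat.splits)
qed

lemma coeff_bm_Q_Suc:
  "coeff (bm_Q (Suc m)) j = (4 * real m + 2 - 2 * real j) * coeff (bm_Q m) j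
     + (if j = 0 then 0 else (6 * real m + 5 - 2 * real j) * coeff (bm_Q m) (j - 1))"
proof (cases "j \<le> Suc m")
  case False
  then have "\<not> j \<le> m" "\<not> j - 1 \<le> m" by simp_all
  then show ?thesis by (simp add: coeff_bm_Q)
next
  case True
  define i where "i = Suc m - j"
  define c :: real where "c = 2 ^ m * fact m"
  have j: "real j = real m + 1 - real i" "i \<le> Suc m"
    using True by (simp_all add: i_def of_nat_diff)
  have "coeff (bm_Q (Suc m)) j = c * (2 * real (m + 1) * bm_d i (m + 1))"
    using True by (simp add: coeff_bm_Q c_def i_def)
  moreover have "coeff (bm_Q m) j = c * (if i = 0 then 0 else bm_d (i - 1) m)"
    using True by (simp add: coeff_bm_Q c_def i_def)
  moreover have "(if j = 0 then 0 else (6 * real m + 5 - 2 * real j) * coeff (bm_Q m) (j - 1))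
      = c * ((4 * real m + 2 * real i + 3) * bm_d i m)"
    using True j by (cases "j = 0") (simp_all add: coeff_bm_Q c_def i_def bm_d_eq_0 algebra_simps)
  ultimately show ?thesis
    unfolding bm_d_Suc_recurrence j(1) by (simp add: algebra_simps)
qed

theorem mainTheorem6:
  shows "bm_Q 0 = 1 \<and>
    (\<forall>m::nat. bm_Q (Suc m) =
       smult (2 * real m + 1) ([:2, 3:] * bm_Q m) - [:0, 2, 2:] * pderiv (bm_Q m))"
proof (intro conjI allI)
  show "bm_Q 0 = 1"
    by (simp add: bm_Q_def bm_d_def monom_0 one_pCons)
qed (rule poly_eqI, subst coeff_smult_linear_minus_pderiv, simp add: coeff_bm_Q_Suc algebra_simps)

end
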